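(* Let $\bar D=\bar\gamma I$ be an isotropic $3\times3$ diffusion tensor, let $b>0$, $\rho>0$, $\eta>0$, and let $w:(0,\infty)\to[0,\infty)$ be the Rician Fisher-information weight function. For a probability measure $s$ on the unit sphere $\mathcal S^2\subset\mathbb R^3$, define the $6\times6$ matrix (indexed by pairs $i\le j$, $l\le r$) $$J(s)=\Big[(2-\delta_{ij})(2-\delta_{lr})\int_{\mathcal S^2}w\big(\exp(-b\,u\bar Du^{\top})\rho/\eta\big)u_iu_ju_lu_r\,s(du)\Big]_{i\le j,\ l\le r}.$$ Then the uniform probability measure $\sigma$ on $\mathcal S^2$ maximizes $\det J(s)$ among all probability measures $s$ on $\mathcal S^2$.
   Context: The weight function is $w(z)=\frac{\exp(-z^2/2)}{z^2}\int_0^\infty x^3\exp\big(-\frac{x^2}{2z^2}\big)\frac{I_1(x)^2}{I_0(x)}dx-z^4\ge0$, where $I_\ell$ is the modified Bessel function of the first kind of order $\ell$; $J(s)$ is the (limiting, per-measurement) Fisher information for the tensor parameter $D$ in the Rician model with signal $S=\rho\exp(-gDg^{\top})$ and gradients $g=\sqrt b\,u$, $u\sim s$. *)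

theory Defs
  imports "HOL-Probability.Probability"
begin

definition besselI :: "nat \<Rightarrow> real \<Rightarrow> real" where
  "besselI \<nu> x = (\<Sum>k. (x / 2) ^ (2 * k + \<nu>) / (fact k * fact (k + \<nu>)))"

definition rician_w :: "real \<Rightarrow> real" where
  "rician_w z = exp (- z\<^sup>2 / 2) / z\<^sup>2 *
      (LBINT x:{0<..}. x ^ 3 * exp (- x\<^sup>2 / (2 * z\<^sup>2)) * (besselI 1 x)\<^sup>2 / besselI 0 x)
    - z ^ 4"

definition S2_space :: "(real^3) measure" where
  "S2_space = restrict_space borel (sphere 0 1)"

text \<open>Uniform probability measure on S^2: radial projection of the normalized
  Lebesgue measure on the unit ball (the origin, a null set, is sent to e_1).\<close>
definition sphere_uniform :: "(real^3) measure" where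
  "sphere_uniform = distr (uniform_measure lborel (ball 0 1)) S2_space
     (\<lambda>x. if x = 0 then axis 1 1 else x /\<^sub>R norm x)"

definition pidx :: "6 \<Rightarrow> 3 \<times> 3" where
  "pidx k = (if k = 1 then (1,1) else if k = 2 then (1,2) else if k = 3 then (1,3)
             else if k = 4 then (2,2) else if k = 5 then (2,3) else (3,3))"

definition kdelta :: "3 \<Rightarrow> 3 \<Rightarrow> real" where
  "kdelta i j = (if i = j then 1 else 0)"

definition Jmat :: "real \<Rightarrow> real \<Rightarrow> real \<Rightarrow> real^3^3 \<Rightarrow> (real^3) measure \<Rightarrow> real^6^6" where
  "Jmat b \<rho> \<eta> D s = (\<chi> p q. case pidx p of (i, j) \<Rightarrow> case pidx q of (l, r) \<Rightarrow>
      (2 - kdelta i j) * (2 - kdelta l r) *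
      (\<integral>u. rician_w (exp (- b * (u \<bullet> (D *v u))) * \<rho> / \<eta>) * (u$i) * (u$j) * (u$l) * (u$r) \<partial>s))"

end

theory Submission
  imports Defs
begin

text \<open>For an isotropic tensor the weight \<open>w(exp(-b u D u\<^sup>T) \<rho>/\<eta>)\<close> takes one and the same
  value \<open>c\<close> at every unit vector \<open>u\<close>, so \<open>J(s) = c M(s)\<close> where \<open>M(s)\<close> is the Gram matrix in
  \<open>L\<^sup>2(s)\<close> of the six quadratics \<open>(2 - \<delta>\<^sub>i\<^sub>j) u\<^sub>i u\<^sub>j\<close>. These are fixed linear combinations of
  \<open>q\<^sub>1 = |u|\<^sup>2\<close> and five harmonic quadratics \<open>q\<^sub>2, ..., q\<^sub>6\<close>, hence
  \<open>det M(s) = (det K)\<^sup>2 det P(s)\<close> with \<open>K\<close> the matrix of coefficients and \<open>P(s)\<close> the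
  Gram matrix of the \<open>q\<^sub>a\<close>.
  By rotation invariance of \<open>\<sigma>\<close> the \<open>q\<^sub>a\<close> are \<open>\<sigma>\<close>-orthogonal with squared norms \<open>\<lambda>\<^sub>a\<close>, and
  \<open>\<Sum>\<^sub>a q\<^sub>a\<^sup>2/\<lambda>\<^sub>a = 6 |u|\<^sup>4\<close>, so that \<open>\<Sum>\<^sub>a P(s)\<^sub>a\<^sub>a/\<lambda>\<^sub>a = 6\<close> for every probability
  measure \<open>s\<close> on the sphere. Hadamard's inequality followed by AM-GM then gives
  \<open>det P(s) \<le> \<Prod>\<^sub>a P(s)\<^sub>a\<^sub>a \<le> \<Prod>\<^sub>a \<lambda>\<^sub>a = det P(\<sigma>)\<close>.\<close>

section \<open>Hadamard's inequality\<close>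

definition psd_matrix :: "real^'n^'n \<Rightarrow> bool" where
  "psd_matrix P \<longleftrightarrow> (\<forall>x. 0 \<le> x \<bullet> (P *v x))"

lemma inner_axis_mult_axis: "axis i (1::real) \<bullet> (P *v axis j 1) = P$i$j"
  by (simp add: matrix_vector_mult_basis inner_axis' column_def)

lemma psd_matrix_diag_nonneg: "psd_matrix P \<Longrightarrow> 0 \<le> P$i$i"
  using inner_axis_mult_axis[of i P i] unfolding psd_matrix_def by metis

lemma psd_matrix_zero_diag_imp_zero_row:
  assumes "psd_matrix P" "transpose P = P" "P$k$k = 0"
  shows "P$k$l = 0"
proof (rule ccontr)
  assume ne: "P$k$l \<noteq> 0"
  have sym: "P$l$k = P$k$l" using assms(2) by (metis transpose_def vec_lambda_beta)
  define a where "a = - (P$l$l + 1) / (2 * P$k$l)"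
  define x where "x = a *\<^sub>R axis k (1::real) + axis l 1"
  have "x \<bullet> (P *v x) = a * a * P$k$k + a * P$k$l + a * P$l$k + P$l$l"
    unfolding x_def
    by (simp add: matrix_vector_right_distrib matrix_vector_mult_scaleR inner_add_left
        inner_add_right inner_axis_mult_axis algebra_simps)
  also have "\<dots> = -1" using ne sym assms(3) by (simp add: a_def field_simps)
  finally show False using assms(1) unfolding psd_matrix_def by (metis neg_0_le_iff_le not_one_le_zero)
qed

lemma psd_matrix_congruence:
  assumes "psd_matrix P" shows "psd_matrix (E ** P ** transpose E)"
  unfolding psd_matrix_def
proof
  fix x
  have "x \<bullet> ((E ** P ** transpose E) *v x) = (transpose E *v x) \<bullet> (P *v (transpose E *v x))"
    by (metis dot_lmul_matrix matrix_vector_mul_assoc transpose_transpose vector_transpose_matrix)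
  then show "0 \<le> x \<bullet> ((E ** P ** transpose E) *v x)" using assms unfolding psd_matrix_def by simp
qed

definition elim_coeff :: "real^'n^'n \<Rightarrow> 'n \<Rightarrow> 'n \<Rightarrow> real" where
  "elim_coeff P k i = (if i = k then 0 else P$i$k / P$k$k)"

definition elim_matrix :: "real^'n^'n \<Rightarrow> 'n \<Rightarrow> real^'n^'n" where
  "elim_matrix P k = (\<chi> i j. (if i = j then 1 else 0) - (if j = k then elim_coeff P k i else 0))"

lemma elim_matrix_mult: "(elim_matrix P k ** X)$i$j = X$i$j - elim_coeff P k i * X$k$j"
proof -
  have "(elim_matrix P k ** X)$i$j
      = (\<Sum>m\<in>UNIV. (if i = m then X$m$j else 0) - (if m = k then elim_coeff P k i * X$m$j else 0))"
    unfolding elim_matrix_def matrix_matrix_mult_def by (auto simp: left_diff_distrib intro!: sum.cong)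
  then show ?thesis by (simp add: sum_subtractf)
qed

lemma mult_transpose_elim_matrix:
  "(X ** transpose (elim_matrix P k))$i$j = X$i$j - elim_coeff P k j * X$i$k"
proof -
  have "(X ** transpose (elim_matrix P k))$i$j
      = (\<Sum>m\<in>UNIV. (if j = m then X$i$m else 0) - (if m = k then elim_coeff P k j * X$i$m else 0))"
    unfolding elim_matrix_def transpose_def matrix_matrix_mult_def
    by (auto simp: right_diff_distrib intro!: sum.cong)
  then show ?thesis by (simp add: sum_subtractf)
qed

lemma det_elim_matrix:
  fixes P :: "real^'n^'n"
  shows "det (elim_matrix P k) = 1"
proof -
  define c where "c = (\<chi> i. elim_coeff P k i)"
  have rows: "transpose (elim_matrix P k)
      = (\<chi> i. if i = k then row k (mat 1) + (- c) else row i (mat 1))"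
    by (simp add: elim_matrix_def transpose_def c_def row_def mat_def vec_eq_iff elim_coeff_def)
  have "- c = (\<Sum>j\<in>UNIV - {k}. (- c$j) *s row j (mat 1 :: real^'n^'n))"
    by (simp add: vec_eq_iff sum_component row_def mat_def c_def elim_coeff_def if_distrib
        cong: if_cong)
  also have "\<dots> \<in> vec.span {row j (mat 1) |j. j \<noteq> k}"
    by (intro vec.span_sum vec.span_scale vec.span_base) auto
  finally have "det (transpose (elim_matrix P k)) = det (mat 1 :: real^'n^'n)"
    unfolding rows by (rule det_row_span)
  then show ?thesis by simp
qed

text \<open>Induction on the rows not yet known to be diagonal: the congruence with
  \<open>elim_matrix P k\<close> (symmetric Gaussian elimination with pivot \<open>P\<^sub>k\<^sub>k\<close>) clears row and column \<open>k\<close>,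
  keeps the determinant and can only decrease the diagonal entries.\<close>

lemma hadamard_inequality_partial:
  fixes P :: "real^'n^'n"
  assumes "finite S" "transpose P = P" "psd_matrix P"
    and "\<And>j l. j \<notin> S \<Longrightarrow> l \<noteq> j \<Longrightarrow> P$j$l = 0"
  shows "det P \<le> (\<Prod>i\<in>UNIV. P$i$i)"
  using assms
proof (induction S arbitrary: P rule: finite_induct)
  case empty
  then show ?case by (simp add: det_diagonal)
next
  case (insert k S)
  have sym: "P$i$j = P$j$i" for i j using insert.prems(1) by (metis transpose_def vec_lambda_beta)
  have diag_prod_nonneg: "0 \<le> (\<Prod>i\<in>UNIV. P$i$i)"
    by (intro prod_nonneg) (simp add: psd_matrix_diag_nonneg insert.prems(2))
  show ?case
  proof (cases "P$k$k = 0")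
    case True
    then have "row k P = 0"
      using psd_matrix_zero_diag_imp_zero_row[OF insert.prems(2,1)] by (simp add: row_def vec_eq_iff)
    then show ?thesis using det_zero_row diag_prod_nonneg by metis
  next
    case pivot: False
    define E where "E = elim_matrix P k"
    define Q where "Q = E ** P ** transpose E"
    have Q: "Q$i$j = (P$i$j - elim_coeff P k i * P$k$j) - elim_coeff P k j * (P$i$k - elim_coeff P k i * P$k$k)"
      for i j unfolding Q_def E_def by (simp add: mult_transpose_elim_matrix elim_matrix_mult)
    have psd_Q: "psd_matrix Q" unfolding Q_def by (rule psd_matrix_congruence[OF insert.prems(2)])
    have "det Q \<le> (\<Prod>i\<in>UNIV. Q$i$i)"
    proof (rule insert.IH)
      show "transpose Q = Q"
        unfolding Q_def using insert.prems(1) by (simp add: matrix_transpose_mul matrix_mul_assoc)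
      show "Q$j$l = 0" if "j \<notin> S" "l \<noteq> j" for j l
      proof (cases "j = k")
        case True
        then show ?thesis using that pivot by (simp add: Q elim_coeff_def sym field_simps)
      next
        case False
        then have "P$j$k = 0" "P$j$l = 0" using insert.prems(3) that by auto
        then show ?thesis using False by (simp add: Q elim_coeff_def)
      qed
    qed (fact psd_Q)
    also have "\<dots> \<le> (\<Prod>i\<in>UNIV. P$i$i)"
    proof (rule prod_mono, rule conjI)
      fix i
      show "0 \<le> Q$i$i" by (rule psd_matrix_diag_nonneg[OF psd_Q])
      have "P$k$k > 0" using psd_matrix_diag_nonneg[OF insert.prems(2), of k] pivot by simp
      then show "Q$i$i \<le> P$i$i"
        by (cases "i = k") (auto simp: Q elim_coeff_def sym[of k i] field_simps power2_eq_square)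
    qed
    also have "det Q = det P" unfolding Q_def E_def by (simp add: det_mul det_elim_matrix)
    finally show ?thesis .
  qed
qed

lemma hadamard_inequality:
  fixes P :: "real^'n^'n"
  assumes "transpose P = P" "psd_matrix P"
  shows "det P \<le> (\<Prod>i\<in>UNIV. P$i$i)"
  by (rule hadamard_inequality_partial[of UNIV]) (use assms in auto)

lemma prod_le_one_if_sum_eq_card:
  fixes y :: "'a \<Rightarrow> real"
  assumes "finite A" "\<And>a. a \<in> A \<Longrightarrow> 0 \<le> y a" "(\<Sum>a\<in>A. y a) = card A"
  shows "(\<Prod>a\<in>A. y a) \<le> 1"
proof -
  have "(\<Prod>a\<in>A. y a) \<le> (\<Prod>a\<in>A. exp (y a - 1))"
  proof (rule prod_mono)
    show "0 \<le> y a \<and> y a \<le> exp (y a - 1)" if "a \<in> A" for a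
      using assms(2)[OF that] exp_ge_add_one_self[of "y a - 1"] by simp
  qed
  also have "\<dots> = exp (\<Sum>a\<in>A. y a - 1)" by (simp add: exp_sum assms(1))
  also have "(\<Sum>a\<in>A. y a - 1) = 0" using assms(3) by (simp add: sum_subtractf)
  finally show ?thesis by simp
qed

lemma det_le_prod_if_weighted_trace_eq_card:
  fixes P :: "real^'n^'n" and w :: "'n \<Rightarrow> real"
  assumes "transpose P = P" "psd_matrix P" "\<And>a. 0 < w a"
    and "(\<Sum>a\<in>UNIV. P$a$a / w a) = CARD('n)"
  shows "det P \<le> (\<Prod>a\<in>UNIV. w a)"
proof -
  have "det P \<le> (\<Prod>a\<in>UNIV. P$a$a)" by (rule hadamard_inequality[OF assms(1,2)])
  also have "\<dots> = (\<Prod>a\<in>UNIV. P$a$a / w a) * (\<Prod>a\<in>UNIV. w a)"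
    using assms(3) by (simp add: prod.distrib[symmetric] less_imp_neq[symmetric])
  also have "\<dots> \<le> 1 * (\<Prod>a\<in>UNIV. w a)"
  proof (rule mult_right_mono)
    show "(\<Prod>a\<in>UNIV. P$a$a / w a) \<le> 1"
      using assms(3,4) psd_matrix_diag_nonneg[OF assms(2)]
      by (intro prod_le_one_if_sum_eq_card) (auto intro: divide_nonneg_pos)
    show "0 \<le> (\<Prod>a\<in>UNIV. w a)" using assms(3) by (simp add: prod_nonneg less_imp_le)
  qed
  finally show ?thesis by simp
qed

lemma det_scaleR: "det (c *\<^sub>R A) = c ^ CARD('n) * det (A :: real^'n^'n)"
proof -
  have "c *\<^sub>R A = (c *\<^sub>R mat 1) ** A" by (simp add: scalar_matrix_assoc[symmetric])
  moreover have "det (c *\<^sub>R mat 1 :: real^'n^'n) = c ^ CARD('n)"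
    by (subst det_diagonal) (simp_all add: mat_def)
  ultimately show ?thesis by (simp add: det_mul)
qed

section \<open>Gram matrices\<close>

definition gram_matrix :: "'a measure \<Rightarrow> ('n \<Rightarrow> 'a \<Rightarrow> real) \<Rightarrow> real^'n^'n" where
  "gram_matrix M f = (\<chi> a b. \<integral>x. f a x * f b x \<partial>M)"

lemma transpose_gram_matrix: "transpose (gram_matrix M f) = gram_matrix M f"
  by (simp add: gram_matrix_def transpose_def vec_eq_iff mult.commute)

lemma psd_gram_matrix:
  fixes f :: "'n::finite \<Rightarrow> 'a \<Rightarrow> real"
  assumes "\<And>a b. integrable M (\<lambda>x. f a x * f b x)"
  shows "psd_matrix (gram_matrix M f)"
  unfolding psd_matrix_def
proof
  fix c :: "real^'n"
  have "c \<bullet> (gram_matrix M f *v c) = (\<Sum>a\<in>UNIV. \<Sum>b\<in>UNIV. \<integral>x. c$a * c$b * (f a x * f b x) \<partial>M)"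
    by (simp add: gram_matrix_def inner_vec_def matrix_vector_mult_def sum_distrib_left mult_ac)
  also have "\<dots> = (\<integral>x. (\<Sum>a\<in>UNIV. \<Sum>b\<in>UNIV. c$a * c$b * (f a x * f b x)) \<partial>M)"
    by (simp add: assms integrable_sum)
  also have "\<dots> = (\<integral>x. (\<Sum>a\<in>UNIV. c$a * f a x)\<^sup>2 \<partial>M)"
    by (simp add: power2_eq_square sum_product mult_ac)
  also have "\<dots> \<ge> 0" by simp
  finally show "0 \<le> c \<bullet> (gram_matrix M f *v c)" .
qed

lemma gram_matrix_linear_combination:
  fixes K :: "real^'n^'m"
  assumes "\<And>p x. f p x = (\<Sum>a\<in>UNIV. K$p$a * g a x)"
    and "\<And>a b. integrable M (\<lambda>x. g a x * g b x)"
  shows "gram_matrix M f = K ** gram_matrix M g ** transpose K"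
proof -
  have "(\<integral>x. f p x * f q x \<partial>M) = (\<integral>x. (\<Sum>a\<in>UNIV. \<Sum>b\<in>UNIV. K$p$a * K$q$b * (g a x * g b x)) \<partial>M)"
    for p q by (simp add: assms(1) sum_product mult_ac)
  also have "\<dots> p q = (\<Sum>a\<in>UNIV. \<Sum>b\<in>UNIV. K$p$a * K$q$b * (\<integral>x. g a x * g b x \<partial>M))" for p q
    by (simp add: assms(2) integrable_sum)
  also have "\<dots> p q = (\<Sum>b\<in>UNIV. (\<Sum>a\<in>UNIV. K$p$a * gram_matrix M g $a$b) * K$q$b)" for p q
    by (subst sum.swap) (simp add: gram_matrix_def sum_distrib_left sum_distrib_right mult_ac)
  finally show ?thesis
    by (simp add: gram_matrix_def matrix_matrix_mult_def transpose_def vec_eq_iff)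
qed

section \<open>The uniform distribution on the sphere\<close>

lemma space_S2_space: "space S2_space = sphere 0 1"
  by (simp add: S2_space_def space_restrict_space)

lemma space_eq_sphere_if_sets_S2_space: "sets M = sets S2_space \<Longrightarrow> space M = sphere 0 1"
  by (metis sets_eq_imp_space_eq space_S2_space)

lemma borel_measurable_S2_space_continuous:
  "continuous_on UNIV f \<Longrightarrow> f \<in> borel_measurable S2_space"
  unfolding S2_space_def by (intro measurable_restrict_space1 borel_measurable_continuous_onI)

lemma integrable_S2_space_continuous:
  fixes f :: "real^3 \<Rightarrow> real"
  assumes "finite_measure M" "sets M = sets S2_space" "continuous_on UNIV f"
  shows "integrable M f"
proof -
  have "compact (f ` sphere 0 1)"
    by (intro compact_continuous_image continuous_on_subset[OF assms(3)]) auto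
  then obtain B where "\<And>x. x \<in> sphere 0 1 \<Longrightarrow> norm (f x) \<le> B"
    by (meson bounded_iff compact_imp_bounded imageI)
  moreover have "f \<in> borel_measurable M"
    using borel_measurable_S2_space_continuous[OF assms(3)] measurable_cong_sets[OF assms(2) refl]
    by blast
  ultimately show ?thesis
    using finite_measure.integrable_const_bound[OF assms(1)] space_eq_sphere_if_sets_S2_space[OF assms(2)]
    by blast
qed

lemma orthogonal_matrix_inverse_apply:
  fixes R :: "real^'n^'n"
  assumes "orthogonal_matrix R"
  shows "(R *v x) v* R = x" "R *v (x v* R) = x"
  by (metis assms matrix_vector_mul_assoc matrix_vector_mul_lid orthogonal_matrix_def
      transpose_matrix_vector)+

lemma orthogonal_matrix_norm_apply:
  fixes R :: "real^'n^'n"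
  assumes "orthogonal_matrix R"
  shows "norm (R *v x) = norm x" "norm (x v* R) = norm x"
  using assms orthogonal_matrix_transpose[of R]
  by (simp_all add: orthogonal_transformation_matrix matrix_vector_mul_linear
      orthogonal_transformation_norm flip: transpose_matrix_vector)

lemma borel_measurable_matrix_vector_mult:
  fixes R :: "real^'n^'m"
  shows "(\<lambda>x. R *v x) \<in> borel \<rightarrow>\<^sub>M borel"
  by (intro borel_measurable_continuous_onI linear_continuous_on matrix_vector_mul_bounded_linear)

lemma emeasure_lborel_orthogonal_image:
  fixes R :: "((real, 'n::{finite,wellorder}) vec, 'n) vec"
  assumes R: "orthogonal_matrix R" and X: "X \<in> sets borel" "bounded X"
  shows "emeasure lborel ((\<lambda>x. R *v x) ` X) = emeasure lborel X"
proof -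
  have ot: "orthogonal_transformation (\<lambda>x. R *v x)"
    using R by (simp add: orthogonal_transformation_matrix matrix_vector_mul_linear)
  have X_lmeasurable: "X \<in> lmeasurable" using X by (intro bounded_set_imp_lmeasurable) auto
  have "(\<lambda>x. R *v x) ` X = (\<lambda>x. x v* R) -` X"
    using orthogonal_matrix_inverse_apply[OF R] by (auto intro: image_eqI[of _ _ "_ v* R"])
  moreover have "(\<lambda>x. x v* R) \<in> borel \<rightarrow>\<^sub>M borel"
    using borel_measurable_matrix_vector_mult[of "transpose R"] by simp
  ultimately have image_borel: "(\<lambda>x. R *v x) ` X \<in> sets borel"
    using measurable_sets[of "\<lambda>x. x v* R" borel borel X] X(1) by simp
  have image_bounded: "bounded ((\<lambda>x. R *v x) ` X)"
    using X(2) by (intro bounded_linear_image) (simp_all add: matrix_vector_mul_bounded_linear)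
  have "measure lborel ((\<lambda>x. R *v x) ` X) = measure lborel X"
    using measure_orthogonal_image[OF ot X_lmeasurable] image_borel X(1) by simp
  then show ?thesis
    using emeasure_bounded_finite[OF image_bounded] emeasure_bounded_finite[OF X(2)]
    by (simp add: emeasure_eq_ennreal_measure)
qed

definition unit_ball_uniform :: "(real^'n) measure" where
  "unit_ball_uniform = uniform_measure lborel (ball 0 1)"

lemma measurable_unit_ball_uniform: "measurable unit_ball_uniform N = measurable borel N"
  unfolding unit_ball_uniform_def by (rule measurable_cong_sets) simp_all

lemma prob_space_unit_ball_uniform: "prob_space (unit_ball_uniform :: (real^'n) measure)"
proof -
  have "unit_ball_vol (real CARD('n)) \<noteq> 0"
    using unit_ball_vol_pos[of "real CARD('n)"] by linarith
  then show ?thesis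
    unfolding unit_ball_uniform_def
    by (intro prob_space_uniform_measure) (simp_all add: emeasure_ball)
qed

lemma AE_unit_ball_uniform_nonzero: "AE x in unit_ball_uniform. x \<noteq> 0"
  unfolding unit_ball_uniform_def
  by (rule AE_uniform_measureI) (auto intro: eventually_mono[OF AE_lborel_singleton[of 0]])

lemma distr_unit_ball_uniform_orthogonal:
  fixes R :: "((real, 'n::{finite,wellorder}) vec, 'n) vec"
  assumes R: "orthogonal_matrix R"
  shows "distr unit_ball_uniform borel (\<lambda>x. R *v x) = unit_ball_uniform"
proof (rule measure_eqI)
  fix A assume "A \<in> sets (distr unit_ball_uniform borel (\<lambda>x. R *v x))"
  then have A: "A \<in> sets borel" by simp
  note inv = orthogonal_matrix_inverse_apply[OF R] and norm = orthogonal_matrix_norm_apply[OF R]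
  have "ball 0 1 \<inter> (\<lambda>x. R *v x) -` A = (\<lambda>x. x v* R) ` (ball 0 1 \<inter> A)"
  proof (intro equalityI subsetI)
    fix x assume "x \<in> ball 0 1 \<inter> (\<lambda>x. R *v x) -` A"
    then have "R *v x \<in> ball 0 1 \<inter> A" using norm by simp
    then show "x \<in> (\<lambda>x. x v* R) ` (ball 0 1 \<inter> A)" using inv(1)[of x] by (metis image_eqI)
  next
    fix y assume "y \<in> (\<lambda>x. x v* R) ` (ball 0 1 \<inter> A)"
    then show "y \<in> ball 0 1 \<inter> (\<lambda>x. R *v x) -` A" using inv(2) norm(2) by auto
  qed
  then have "emeasure lborel (ball 0 1 \<inter> (\<lambda>x. R *v x) -` A) = emeasure lborel (ball 0 1 \<inter> A)"
    using emeasure_lborel_orthogonal_image[of "transpose R" "ball 0 1 \<inter> A"] R A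
    by (simp add: orthogonal_matrix_transpose bounded_Int)
  moreover have "(\<lambda>x. R *v x) -` A \<in> sets borel"
    using measurable_sets[OF borel_measurable_matrix_vector_mult A] by simp
  ultimately show "emeasure (distr unit_ball_uniform borel (\<lambda>x. R *v x)) A = emeasure unit_ball_uniform A"
    using A borel_measurable_matrix_vector_mult[of R]
    by (simp add: emeasure_distr measurable_unit_ball_uniform)
       (simp add: unit_ball_uniform_def emeasure_uniform_measure Int_commute)
qed (simp add: unit_ball_uniform_def)

definition radial_proj :: "real^3 \<Rightarrow> real^3" where
  "radial_proj x = (if x = 0 then axis 1 1 else x /\<^sub>R norm x)"

lemma sphere_uniform_eq_distr: "sphere_uniform = distr unit_ball_uniform S2_space radial_proj"
  by (simp add: sphere_uniform_def unit_ball_uniform_def radial_proj_def[abs_def])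

lemma radial_proj_measurable: "radial_proj \<in> unit_ball_uniform \<rightarrow>\<^sub>M S2_space"
  unfolding S2_space_def
proof (rule measurable_restrict_space2)
  show "radial_proj \<in> space unit_ball_uniform \<rightarrow> sphere 0 1" by (auto simp: radial_proj_def)
  show "radial_proj \<in> unit_ball_uniform \<rightarrow>\<^sub>M borel"
    unfolding measurable_unit_ball_uniform radial_proj_def by measurable
qed

lemma prob_space_sphere_uniform: "prob_space sphere_uniform"
  unfolding sphere_uniform_eq_distr
  by (rule prob_space.prob_space_distr[OF prob_space_unit_ball_uniform radial_proj_measurable])

lemma sets_sphere_uniform: "sets sphere_uniform = sets S2_space"
  by (simp add: sphere_uniform_eq_distr)

lemma radial_proj_orthogonal:
  "orthogonal_matrix R \<Longrightarrow> x \<noteq> 0 \<Longrightarrow> radial_proj (R *v x) = R *v radial_proj x"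
  using orthogonal_matrix_norm_apply[of R x]
  by (auto simp: radial_proj_def matrix_vector_mult_scaleR)

lemma integral_sphere_uniform_orthogonal:
  fixes R :: "real^3^3" and g :: "real^3 \<Rightarrow> real"
  assumes R: "orthogonal_matrix R" and g: "continuous_on UNIV g"
  shows "(\<integral>u. g (R *v u) \<partial>sphere_uniform) = (\<integral>u. g u \<partial>sphere_uniform)"
proof -
  have gR: "continuous_on UNIV (\<lambda>u. g (R *v u))"
    by (intro continuous_on_compose2[OF g] linear_continuous_on matrix_vector_mul_bounded_linear) auto
  have g_proj: "(\<lambda>x. g (radial_proj x)) \<in> borel_measurable borel" if "continuous_on UNIV g"
    for g :: "real^3 \<Rightarrow> real"
    using measurable_comp[OF radial_proj_measurable borel_measurable_S2_space_continuous[OF that]]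
    by (simp add: o_def measurable_unit_ball_uniform)
  have "(\<integral>u. g u \<partial>sphere_uniform) = (\<integral>x. g (radial_proj x) \<partial>unit_ball_uniform)"
    unfolding sphere_uniform_eq_distr
    by (rule integral_distr[OF radial_proj_measurable borel_measurable_S2_space_continuous[OF g]])
  also have "\<dots> = (\<integral>x. g (radial_proj x) \<partial>distr unit_ball_uniform borel (\<lambda>x. R *v x))"
    by (simp add: distr_unit_ball_uniform_orthogonal[OF R])
  also have "\<dots> = (\<integral>x. g (radial_proj (R *v x)) \<partial>unit_ball_uniform)"
    using g_proj[OF g] borel_measurable_matrix_vector_mult[of R]
    by (intro integral_distr) (simp_all add: measurable_unit_ball_uniform)
  also have "\<dots> = (\<integral>x. g (R *v radial_proj x) \<partial>unit_ball_uniform)"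
    using g_proj[OF gR] measurable_compose[OF borel_measurable_matrix_vector_mult g_proj[OF g]]
      AE_unit_ball_uniform_nonzero
    by (intro integral_cong_AE)
       (auto elim!: eventually_mono simp: radial_proj_orthogonal[OF R] measurable_unit_ball_uniform)
  also have "\<dots> = (\<integral>u. g (R *v u) \<partial>sphere_uniform)"
    unfolding sphere_uniform_eq_distr
    by (rule integral_distr[OF radial_proj_measurable borel_measurable_S2_space_continuous[OF gR], symmetric])
  finally show ?thesis ..
qed

section \<open>Fourth moments of the uniform distribution\<close>

definition coord_reflection :: "'n \<Rightarrow> real^'n^'n" where
  "coord_reflection k = (\<chi> i j. if i = j then (if i = k then -1 else 1) else 0)"

lemma coord_reflection_apply: "coord_reflection k *v u = (\<chi> i. if i = k then - u$i else u$i)"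
  by (simp add: coord_reflection_def matrix_vector_mult_def vec_eq_iff
      if_distrib[where f="\<lambda>x. x * _"] cong: if_cong)

lemma orthogonal_coord_reflection: "orthogonal_matrix (coord_reflection k)"
  by (simp add: orthogonal_matrix_def coord_reflection_def matrix_matrix_mult_def transpose_def
      mat_def vec_eq_iff if_distrib[where f="\<lambda>x. x * _"] cong: if_cong)

definition perm_matrix :: "('n \<Rightarrow> 'n) \<Rightarrow> real^'n^'n" where
  "perm_matrix \<pi> = (\<chi> i j. if j = \<pi> i then 1 else 0)"

lemma perm_matrix_apply: "perm_matrix \<pi> *v u = (\<chi> i. u $ \<pi> i)"
  by (simp add: perm_matrix_def matrix_vector_mult_def vec_eq_iff
      if_distrib[where f="\<lambda>x. x * _"] cong: if_cong)

lemma orthogonal_perm_matrix: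
  assumes "bij \<pi>"
  shows "orthogonal_matrix (perm_matrix \<pi>)"
proof -
  have "(\<Sum>a\<in>UNIV. (if i = \<pi> a then 1 else 0) * (if j = \<pi> a then 1 else 0))
      = (\<Sum>b\<in>UNIV. (if i = b then 1 else 0) * (if j = b then 1 else 0) :: real)" for i j
    by (rule sum.reindex_bij_betw[OF assms])
  moreover have "\<pi> i = \<pi> j \<longleftrightarrow> i = j" for i j using assms by (auto dest: bij_is_inj injD)
  ultimately show ?thesis
    by (simp add: orthogonal_matrix_def perm_matrix_def matrix_matrix_mult_def transpose_def
        mat_def vec_eq_iff if_distrib[where f="\<lambda>x. x * _"] cong: if_cong)
qed

definition coord_swap :: "'n \<Rightarrow> 'n \<Rightarrow> 'n \<Rightarrow> 'n" where
  "coord_swap k l i = (if i = k then l else if i = l then k else i)"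

lemma bij_coord_swap: "bij (coord_swap k l)"
  by (rule o_bij[of "coord_swap k l"]) (auto simp: coord_swap_def fun_eq_iff)

text \<open>Rotation by \<open>\<pi>/4\<close> in the \<open>(u\<^sub>1, u\<^sub>2)\<close>-plane; it links \<open>E u\<^sub>1\<^sup>4\<close> to \<open>E u\<^sub>1\<^sup>2 u\<^sub>2\<^sup>2\<close>,
  which permutations of the coordinates alone cannot do.\<close>

definition rotation_12 :: "real^3^3" where
  "rotation_12 = vector [vector [1/sqrt 2, -1/sqrt 2, 0], vector [1/sqrt 2, 1/sqrt 2, 0], vector [0, 0, 1]]"

lemma orthogonal_rotation_12: "orthogonal_matrix rotation_12"
  by (simp add: orthogonal_matrix rotation_12_def matrix_matrix_mult_def transpose_def mat_def
      vec_eq_iff forall_3 sum_3 power2_eq_square[symmetric])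

lemma rotation_12_apply:
  "(rotation_12 *v u)$1 = (u$1 - u$2) / sqrt 2" "(rotation_12 *v u)$2 = (u$1 + u$2) / sqrt 2"
  by (simp_all add: rotation_12_def matrix_vector_mult_def sum_3 field_simps)

lemmas sphere_mean_linear = Bochner_Integration.integral_add Bochner_Integration.integral_diff
  integral_mult_right_zero integrable_add integrable_diff integrable_mult_right

lemma rotation_12_sq_mult_sq:
  "((rotation_12 *v u)$1)^2 * ((rotation_12 *v u)$2)^2 * 4 = (u$1)^4 + (u$2)^4 - 2 * ((u$1)^2 * (u$2)^2)"
proof -
  have "((rotation_12 *v u)$1)^2 * ((rotation_12 *v u)$2)^2 * 4 = ((u$1 - u$2) * (u$1 + u$2))^2"
    by (simp add: rotation_12_apply power_divide power_mult_distrib)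
  also have "\<dots> = (u$1)^4 + (u$2)^4 - 2 * ((u$1)^2 * (u$2)^2)"
    by (simp add: power2_eq_square power4_eq_xxxx algebra_simps)
  finally show ?thesis .
qed

abbreviation sphere_mean :: "(real^3 \<Rightarrow> real) \<Rightarrow> real" where
  "sphere_mean f \<equiv> integral\<^sup>L sphere_uniform f"

lemma integrable_sphere_uniform_continuous:
  fixes f :: "real^3 \<Rightarrow> real"
  shows "continuous_on UNIV f \<Longrightarrow> integrable sphere_uniform f"
  by (rule integrable_S2_space_continuous[OF prob_space.finite_measure[OF prob_space_sphere_uniform]
        sets_sphere_uniform])

lemma integrable_sphere_uniform_monomial [simp]:
  "integrable sphere_uniform (\<lambda>u. (u$i)^m * (u$j)^n)"
  "integrable sphere_uniform (\<lambda>u. (u$i)^m)"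
  by (intro integrable_sphere_uniform_continuous continuous_intros)+

lemma sphere_mean_cong: "(\<And>u. norm u = 1 \<Longrightarrow> f u = g u) \<Longrightarrow> sphere_mean f = sphere_mean g"
  using space_eq_sphere_if_sets_S2_space[OF sets_sphere_uniform]
  by (intro Bochner_Integration.integral_cong) auto

lemma sphere_mean_orthogonal_odd:
  assumes "orthogonal_matrix R" "continuous_on UNIV h" "\<And>u. h (R *v u) = - h u"
  shows "sphere_mean h = 0"
  using integral_sphere_uniform_orthogonal[OF assms(1,2)] assms(3) by simp

lemma sphere_mean_permute_coords:
  assumes "bij \<pi>" "continuous_on UNIV g"
  shows "sphere_mean (\<lambda>u. g (\<chi> i. u $ \<pi> i)) = sphere_mean g"
  using integral_sphere_uniform_orthogonal[OF orthogonal_perm_matrix[OF assms(1)] assms(2)]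
  by (simp add: perm_matrix_apply)

lemma sum_sq_coords_sphere: "norm (u::real^3) = 1 \<Longrightarrow> (u$1)^2 + (u$2)^2 + (u$3)^2 = 1"
  using dot_square_norm[of u] by (simp add: inner_vec_def sum_3 power2_eq_square)

lemma sphere_mean_fourth_moments:
  "sphere_mean (\<lambda>u. (u$i)^4) = 1/5"
  "i \<noteq> j \<Longrightarrow> sphere_mean (\<lambda>u. (u$i)^2 * (u$j)^2) = 1/15"
proof -
  define A where "A = sphere_mean (\<lambda>u. (u$1)^4)"
  define B where "B = sphere_mean (\<lambda>u. (u$1)^2 * (u$2)^2)"
  have A: "sphere_mean (\<lambda>u. (u$i)^4) = A" for i
    using sphere_mean_permute_coords[OF bij_coord_swap, of "\<lambda>u. (u$1)^4" 1 i]
    by (simp add: A_def coord_swap_def continuous_intros)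
  have B: "sphere_mean (\<lambda>u. (u$i)^2 * (u$j)^2) = B" if "i \<noteq> j" for i j
  proof -
    define \<pi> where "\<pi> = coord_swap 1 i \<circ> coord_swap 2 (coord_swap 1 i j)"
    have "\<pi> 1 = i" "\<pi> 2 = j" using that by (auto simp: \<pi>_def coord_swap_def)
    then show ?thesis
      using sphere_mean_permute_coords[of \<pi> "\<lambda>u. (u$1)^2 * (u$2)^2"]
      by (simp add: B_def \<pi>_def bij_comp bij_coord_swap continuous_intros)
  qed
  have "B * 4 = sphere_mean (\<lambda>u. ((rotation_12 *v u)$1)^2 * ((rotation_12 *v u)$2)^2 * 4)"
    using integral_sphere_uniform_orthogonal[OF orthogonal_rotation_12, of "\<lambda>u. (u$1)^2 * (u$2)^2"]
    by (simp add: B_def continuous_intros)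
  also have "\<dots> = sphere_mean (\<lambda>u. (u$1)^4 + (u$2)^4 - 2 * ((u$1)^2 * (u$2)^2))"
    by (simp only: rotation_12_sq_mult_sq)
  also have "\<dots> = 2 * A - 2 * B"
    using A B[of 1 2] by (simp add: sphere_mean_linear)
  finally have A_eq: "A = 3 * B" by simp
  have "sphere_mean (\<lambda>u. (u$1)^4 + (u$2)^4 + (u$3)^4
      + 2 * ((u$1)^2 * (u$2)^2) + 2 * ((u$1)^2 * (u$3)^2) + 2 * ((u$2)^2 * (u$3)^2)) = sphere_mean (\<lambda>u. 1)"
  proof (rule sphere_mean_cong)
    fix u :: "real^3" assume "norm u = 1"
    then have "((u$1)^2 + (u$2)^2 + (u$3)^2)^2 = 1" by (simp add: sum_sq_coords_sphere)
    then show "(u$1)^4 + (u$2)^4 + (u$3)^4 + 2 * ((u$1)^2 * (u$2)^2) + 2 * ((u$1)^2 * (u$3)^2)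
        + 2 * ((u$2)^2 * (u$3)^2) = 1"
      by (simp add: power2_eq_square power4_eq_xxxx algebra_simps)
  qed
  then have "3 * A + 6 * B = 1"
    using A B prob_space.prob_space[OF prob_space_sphere_uniform] by (simp add: sphere_mean_linear)
  then show "sphere_mean (\<lambda>u. (u$i)^4) = 1/5" "i \<noteq> j \<Longrightarrow> sphere_mean (\<lambda>u. (u$i)^2 * (u$j)^2) = 1/15"
    using A B A_eq by simp_all
qed

section \<open>The Fisher information matrix\<close>

lemma exhaust_6:
  fixes x :: 6
  shows "x = 1 \<or> x = 2 \<or> x = 3 \<or> x = 4 \<or> x = 5 \<or> x = 6"
proof (induct x)
  case (of_int z)
  then have "z = 0 \<or> z = 1 \<or> z = 2 \<or> z = 3 \<or> z = 4 \<or> z = 5" by fastforce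
  then show ?case by auto
qed

lemma sum_UNIV_6: "sum f (UNIV::6 set) = f 1 + f 2 + f 3 + f 4 + f 5 + f 6"
proof -
  have UNIV_6: "UNIV = {1, 2, 3, 4, 5, 6::6}" using exhaust_6 by auto
  show ?thesis unfolding UNIV_6 by (simp add: ac_simps)
qed

text \<open>\<open>|u|\<^sup>2\<close> together with a basis of the harmonic quadratics; orthogonal in \<open>L\<^sup>2(\<sigma>)\<close>.\<close>

definition quad_basis :: "6 \<Rightarrow> real^3 \<Rightarrow> real" where
  "quad_basis a u =
     (if a = 1 then (u$1)^2 + (u$2)^2 + (u$3)^2
      else if a = 2 then (u$1)^2 - (u$2)^2
      else if a = 3 then (u$1)^2 + (u$2)^2 - 2 * (u$3)^2
      else if a = 4 then u$1 * u$2
      else if a = 5 then u$1 * u$3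
      else u$2 * u$3)"

definition quad_basis_sqnorm :: "6 \<Rightarrow> real" where
  "quad_basis_sqnorm a = (if a = 1 then 1 else if a = 2 then 4/15 else if a = 3 then 4/5 else 1/15)"

lemma continuous_on_quad_basis [continuous_intros]: "continuous_on S (quad_basis a)"
  using exhaust_6[of a] by (auto simp: quad_basis_def[abs_def] intro!: continuous_intros)

lemma integrable_quad_basis_mult:
  "finite_measure M \<Longrightarrow> sets M = sets S2_space \<Longrightarrow> integrable M (\<lambda>u. quad_basis a u * quad_basis b u)"
  by (intro integrable_S2_space_continuous continuous_intros)

lemma sphere_mean_quad_basis_sq:
  "sphere_mean (\<lambda>u. quad_basis a u * quad_basis a u) = quad_basis_sqnorm a"
proof -
  note moments = sphere_mean_fourth_moments sphere_mean_linear
  consider "a = 1" | "a = 2" | "a = 3" | "a = 4" | "a = 5" | "a = 6" using exhaust_6 by blast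
  then show ?thesis
  proof cases
    case 1
    then have "sphere_mean (\<lambda>u. quad_basis a u * quad_basis a u) = sphere_mean (\<lambda>u. 1)"
      by (intro sphere_mean_cong) (simp add: quad_basis_def sum_sq_coords_sphere)
    then show ?thesis
      using 1 prob_space.prob_space[OF prob_space_sphere_uniform] by (simp add: quad_basis_sqnorm_def)
  next
    case 2
    then have "(\<lambda>u. quad_basis a u * quad_basis a u) = (\<lambda>u. (u$1)^4 + (u$2)^4 - 2 * ((u$1)^2 * (u$2)^2))"
      by (simp add: quad_basis_def fun_eq_iff power2_eq_square power4_eq_xxxx algebra_simps)
    then show ?thesis using 2 by (simp add: moments quad_basis_sqnorm_def)
  next
    case 3
    then have "(\<lambda>u. quad_basis a u * quad_basis a u) = (\<lambda>u. (u$1)^4 + (u$2)^4 + 4 * (u$3)^4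
        + 2 * ((u$1)^2 * (u$2)^2) - 4 * ((u$1)^2 * (u$3)^2) - 4 * ((u$2)^2 * (u$3)^2))"
      by (simp add: quad_basis_def fun_eq_iff power2_eq_square power4_eq_xxxx algebra_simps)
    then show ?thesis using 3 by (simp add: moments quad_basis_sqnorm_def)
  next
    case 4
    then have "(\<lambda>u. quad_basis a u * quad_basis a u) = (\<lambda>u. (u$1)^2 * (u$2)^2)"
      by (simp add: quad_basis_def fun_eq_iff power2_eq_square)
    then show ?thesis using 4 by (simp add: moments quad_basis_sqnorm_def)
  next
    case 5
    then have "(\<lambda>u. quad_basis a u * quad_basis a u) = (\<lambda>u. (u$1)^2 * (u$3)^2)"
      by (simp add: quad_basis_def fun_eq_iff power2_eq_square)
    then show ?thesis using 5 by (simp add: moments quad_basis_sqnorm_def)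
  next
    case 6
    then have "(\<lambda>u. quad_basis a u * quad_basis a u) = (\<lambda>u. (u$2)^2 * (u$3)^2)"
      by (simp add: quad_basis_def fun_eq_iff power2_eq_square)
    then show ?thesis using 6 by (simp add: moments quad_basis_sqnorm_def)
  qed
qed

lemma sphere_mean_quad_basis_mult_offdiag:
  assumes "a \<noteq> b"
  shows "sphere_mean (\<lambda>u. quad_basis a u * quad_basis b u) = 0"
proof -
  let ?symmetries = "{coord_reflection 1, coord_reflection 2, perm_matrix (coord_swap 1 2)}"
  have "sphere_mean (\<lambda>u. quad_basis 1 u * quad_basis 3 u) = 0"
  proof -
    have "(\<lambda>u. quad_basis 1 u * quad_basis 3 u) = (\<lambda>u. (u$1)^4 + (u$2)^4 - 2 * (u$3)^4
        + 2 * ((u$1)^2 * (u$2)^2) - (u$1)^2 * (u$3)^2 - (u$2)^2 * (u$3)^2)"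
      by (simp add: quad_basis_def fun_eq_iff power2_eq_square power4_eq_xxxx algebra_simps)
    then show ?thesis by (simp add: sphere_mean_fourth_moments sphere_mean_linear)
  qed
  moreover have "sphere_mean (\<lambda>u. quad_basis a u * quad_basis b u) = 0"
    if "R \<in> ?symmetries" "\<forall>u. quad_basis a (R *v u) * quad_basis b (R *v u) = - (quad_basis a u * quad_basis b u)"
    for R
    using that
    by (intro sphere_mean_orthogonal_odd[of R])
       (auto simp: orthogonal_coord_reflection orthogonal_perm_matrix[OF bij_coord_swap]
         intro!: continuous_intros)
  moreover have "a = 1 \<and> b = 3 \<or> a = 3 \<and> b = 1 \<or>
      (\<exists>R\<in>?symmetries. \<forall>u. quad_basis a (R *v u) * quad_basis b (R *v u) = - (quad_basis a u * quad_basis b u))"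
    using exhaust_6[of a] exhaust_6[of b] assms
    by (elim disjE) (simp_all add: quad_basis_def coord_reflection_apply perm_matrix_apply coord_swap_def
        algebra_simps)
  ultimately show ?thesis by (auto simp: mult.commute)
qed

lemma gram_matrix_sphere_uniform_quad_basis:
  "gram_matrix sphere_uniform quad_basis = (\<chi> a b. if a = b then quad_basis_sqnorm a else 0)"
  by (simp add: gram_matrix_def vec_eq_iff sphere_mean_quad_basis_sq sphere_mean_quad_basis_mult_offdiag)

lemma sum_quad_basis_sq_div_sqnorm:
  "(\<Sum>a\<in>UNIV. quad_basis a u * quad_basis a u / quad_basis_sqnorm a) = 6 * ((u$1)^2 + (u$2)^2 + (u$3)^2)^2"
  by (simp add: sum_UNIV_6 quad_basis_def quad_basis_sqnorm_def field_simps power2_eq_square)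

lemma weighted_trace_gram_matrix_quad_basis:
  assumes "prob_space M" "sets M = sets S2_space"
  shows "(\<Sum>a\<in>UNIV. gram_matrix M quad_basis $ a $ a / quad_basis_sqnorm a) = CARD(6)"
proof -
  have "(\<Sum>a\<in>UNIV. gram_matrix M quad_basis $ a $ a / quad_basis_sqnorm a)
      = (\<integral>u. (\<Sum>a\<in>UNIV. quad_basis a u * quad_basis a u / quad_basis_sqnorm a) \<partial>M)"
    using integrable_quad_basis_mult[OF prob_space.finite_measure[OF assms(1)] assms(2)]
    by (simp add: gram_matrix_def Bochner_Integration.integral_sum)
  also have "\<dots> = (\<integral>u. 6 \<partial>M)"
    using space_eq_sphere_if_sets_S2_space[OF assms(2)]
    by (intro Bochner_Integration.integral_cong) (simp_all add: sum_quad_basis_sq_div_sqnorm sum_sq_coords_sphere)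
  finally show ?thesis using prob_space.prob_space[OF assms(1)] by simp
qed

lemma det_gram_matrix_quad_basis_le:
  assumes "prob_space M" "sets M = sets S2_space"
  shows "det (gram_matrix M quad_basis) \<le> det (gram_matrix sphere_uniform quad_basis)"
proof -
  have "det (gram_matrix M quad_basis) \<le> (\<Prod>a\<in>UNIV. quad_basis_sqnorm a)"
    using integrable_quad_basis_mult[OF prob_space.finite_measure[OF assms(1)] assms(2)]
    by (intro det_le_prod_if_weighted_trace_eq_card transpose_gram_matrix psd_gram_matrix
        weighted_trace_gram_matrix_quad_basis[OF assms]) (simp_all add: quad_basis_sqnorm_def)
  then show ?thesis by (simp add: gram_matrix_sphere_uniform_quad_basis det_diagonal)
qed

definition dyad_coord :: "6 \<Rightarrow> real^3 \<Rightarrow> real" where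
  "dyad_coord p u = (case pidx p of (i, j) \<Rightarrow> (2 - kdelta i j) * u$i * u$j)"

definition dyad_quad_coeff :: "real^6^6" where
  "dyad_quad_coeff = (\<chi> p a.
     if p = 1 then (if a = 1 then 1/3 else if a = 2 then 1/2 else if a = 3 then 1/6 else 0)
     else if p = 2 then (if a = 4 then 2 else 0)
     else if p = 3 then (if a = 5 then 2 else 0)
     else if p = 4 then (if a = 1 then 1/3 else if a = 2 then -1/2 else if a = 3 then 1/6 else 0)
     else if p = 5 then (if a = 6 then 2 else 0)
     else (if a = 1 then 1/3 else if a = 3 then -1/3 else 0))"

lemma dyad_coord_eq_sum_quad_basis:
  "dyad_coord p u = (\<Sum>a\<in>UNIV. dyad_quad_coeff $ p $ a * quad_basis a u)"
  using exhaust_6[of p]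
  by (elim disjE) (simp_all add: sum_UNIV_6 dyad_coord_def dyad_quad_coeff_def quad_basis_def
      pidx_def kdelta_def algebra_simps power2_eq_square)

lemma gram_matrix_dyad_coord:
  assumes "finite_measure M" "sets M = sets S2_space"
  shows "gram_matrix M dyad_coord = dyad_quad_coeff ** gram_matrix M quad_basis ** transpose dyad_quad_coeff"
  by (rule gram_matrix_linear_combination[OF dyad_coord_eq_sum_quad_basis integrable_quad_basis_mult[OF assms]])

lemma Jmat_isotropic:
  assumes "sets M = sets S2_space"
  shows "Jmat b \<rho> \<eta> (\<gamma> *\<^sub>R mat 1) M = rician_w (exp (- b * \<gamma>) * \<rho> / \<eta>) *\<^sub>R gram_matrix M dyad_coord"
proof -
  have "u \<bullet> ((\<gamma> *\<^sub>R mat 1) *v u) = \<gamma>" if "u \<in> space M" for u :: "real^3"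
    using that space_eq_sphere_if_sets_S2_space[OF assms] dot_square_norm[of u]
    by (simp flip: scaleR_matrix_vector_assoc)
  then have "Jmat b \<rho> \<eta> (\<gamma> *\<^sub>R mat 1) M $ p $ q
      = rician_w (exp (- b * \<gamma>) * \<rho> / \<eta>) * gram_matrix M dyad_coord $ p $ q" for p q
    by (auto simp: Jmat_def gram_matrix_def dyad_coord_def mult_ac split: prod.split
        intro!: Bochner_Integration.integral_cong simp flip: integral_mult_right_zero)
  then show ?thesis by (simp add: vec_eq_iff)
qed

theorem proposition6p1:
  fixes \<gamma> b \<rho> \<eta> :: real and D :: "real^3^3"
  assumes "D = \<gamma> *\<^sub>R mat 1" and "\<gamma> > 0"
    and "b > 0" and "\<rho> > 0" and "\<eta> > 0"
  shows "prob_space sphere_uniform \<and> sets sphere_uniform = sets S2_space \<and>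
    (\<forall>s. prob_space s \<and> sets s = sets S2_space \<longrightarrow>
        det (Jmat b \<rho> \<eta> D s) \<le> det (Jmat b \<rho> \<eta> D sphere_uniform))"
proof (intro conjI allI impI prob_space_sphere_uniform sets_sphere_uniform, elim conjE)
  fix s :: "(real^3) measure"
  assume s: "prob_space s" "sets s = sets S2_space"
  define c where "c = rician_w (exp (- b * \<gamma>) * \<rho> / \<eta>) ^ 6 * det dyad_quad_coeff ^ 2"
  have det_J: "det (Jmat b \<rho> \<eta> D M) = c * det (gram_matrix M quad_basis)"
    if "prob_space M" "sets M = sets S2_space" for M
    using that prob_space.finite_measure[OF that(1)]
    by (simp add: assms(1) c_def Jmat_isotropic det_scaleR gram_matrix_dyad_coord det_mul power2_eq_square)
  \<comment> \<open>The weight enters to an even power.\<close>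
  have "0 \<le> c" by (simp add: c_def zero_le_even_power)
  then show "det (Jmat b \<rho> \<eta> D s) \<le> det (Jmat b \<rho> \<eta> D sphere_uniform)"
    using det_gram_matrix_quad_basis_le[OF s]
    by (simp add: det_J s prob_space_sphere_uniform sets_sphere_uniform mult_left_mono)
qed

end
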